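(* Let $A$ be the set of cyclic Carlitz compositions. Then \[ \sum_{W\in A}x^{\mathrm{sum}(W)}=\frac{\sum_{i=1}^\infty\frac{x^i}{(1+x^i)^2}}{1-\sum_{i=1}^\infty\frac{x^i}{1+x^i}}+\sum_{i=1}^\infty\frac{x^{2i}}{1+x^i}. \]
   Context: A composition is a nonempty finite sequence $W=(c_1,\ldots,c_l)$ of positive integers, with $\mathrm{sum}(W)=c_1+\cdots+c_l$. It is a Carlitz composition if no two adjacent parts are equal, and a cyclic Carlitz composition if moreover, when $l\ge2$, its first and last parts are not equal (equivalently, every cyclic rotation of it has no two adjacent equal parts); compositions with a single part are included. *)

theory Defs
  imports "HOL-Computational_Algebra.Formal_Power_Series"
begin

definition composition :: "nat list \<Rightarrow> bool" where
  "composition W \<longleftrightarrow> W \<noteq> [] \<and> (\<forall>c\<in>set W. 0 < c)"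

definition carlitz :: "nat list \<Rightarrow> bool" where
  "carlitz W \<longleftrightarrow> composition W \<and> (\<forall>i. Suc i < length W \<longrightarrow> W ! i \<noteq> W ! Suc i)"

definition cyclic_carlitz :: "nat list \<Rightarrow> bool" where
  "cyclic_carlitz W \<longleftrightarrow> carlitz W \<and> (2 \<le> length W \<longrightarrow> hd W \<noteq> last W)"

definition cyc_carlitz_gf :: "real fps" where
  "cyc_carlitz_gf = Abs_fps (\<lambda>n. real (card {W. cyclic_carlitz W \<and> sum_list W = n}))"

end

theory Submission
  imports Defs
begin

text \<open>
  Let \<open>C\<close> be the generating function of Carlitz compositions and \<open>C\<^sub>j\<close> that of those with
  first part \<open>j\<close>. Removing the first part \<open>j\<close> leaves nothing or a Carlitz composition not
  starting with \<open>j\<close>, so \<open>C\<^sub>j = x\<^sup>j (1 + C - C\<^sub>j)\<close>, i.e. \<open>C\<^sub>j = a\<^sub>j (1 + C)\<close> with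
  \<open>a\<^sub>j = x\<^sup>j / (1 + x\<^sup>j)\<close>; summing over \<open>j\<close> gives \<open>1 + C = 1 / (1 - \<Sum>a\<^sub>j)\<close>.
  The same peeling applied to the generating function \<open>E\<^sub>j\<close> of compositions with first and
  last part \<open>j\<close>, together with reversal (which exchanges "ends with \<open>j\<close>" and "starts with
  \<open>j\<close>"), gives \<open>E\<^sub>j = a\<^sub>j (1 + C\<^sub>j)\<close>. A Carlitz composition fails to be cyclic exactly when
  it has at least two parts and equal first and last part, so the cyclic ones are counted by
  \<open>C - \<Sum>E\<^sub>j + \<Sum>x\<^sup>j\<close>, and the formula follows by algebra.
\<close>

unbundle fps_syntax

subsection \<open>Coefficientwise summation of power series\<close>

text \<open>The \<open>i\<close>-th term is divisible by \<open>X\<^sup>i\<^sup>+\<^sup>1\<close>, so each coefficient of the series is a finite sum.\<close>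
definition fps_vanishing :: "(nat \<Rightarrow> 'a::comm_ring_1 fps) \<Rightarrow> bool" where
  "fps_vanishing f \<longleftrightarrow> (\<forall>i n. n \<le> i \<longrightarrow> f i $ n = 0)"

lemma fps_vanishing_partial_sum_nth:
  assumes "fps_vanishing f" "n \<le> m"
  shows "(\<Sum>i<m. f i $ n) = (\<Sum>i<n. f i $ n)"
  by (rule sum.mono_neutral_right) (use assms in \<open>auto simp: fps_vanishing_def\<close>)

lemma fps_vanishing_sums:
  assumes "fps_vanishing f"
  shows "f sums Abs_fps (\<lambda>n. \<Sum>i<n. f i $ n)"
  unfolding sums_def
proof (rule tendsto_fpsI)
  fix n
  show "\<forall>\<^sub>F m in sequentially. sum f {..<m} $ n = Abs_fps (\<lambda>n. \<Sum>i<n. f i $ n) $ n"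
  proof (rule eventually_sequentiallyI)
    fix m assume "n \<le> m"
    then show "sum f {..<m} $ n = Abs_fps (\<lambda>n. \<Sum>i<n. f i $ n) $ n"
      unfolding fps_sum_nth fps_nth_Abs_fps by (rule fps_vanishing_partial_sum_nth[OF assms])
  qed
qed

lemma suminf_fps_vanishing_nth:
  "fps_vanishing f \<Longrightarrow> (\<Sum>i. f i) $ n = (\<Sum>i<n. f i $ n)"
  by (simp flip: sums_unique[OF fps_vanishing_sums])

lemma fps_vanishing_X_power_mult: "fps_vanishing (\<lambda>i. fps_X ^ (i+1) * f i)"
  unfolding fps_vanishing_def fps_X_power_mult_nth by simp

lemma fps_vanishing_X_power: "fps_vanishing (\<lambda>i. fps_X ^ (i+1))"
  using fps_vanishing_X_power_mult[of "\<lambda>_. 1"] by simp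

lemma fps_vanishing_add:
  "fps_vanishing f \<Longrightarrow> fps_vanishing g \<Longrightarrow> fps_vanishing (\<lambda>i. f i + g i)"
  by (simp add: fps_vanishing_def)

lemma fps_vanishing_diff:
  "fps_vanishing f \<Longrightarrow> fps_vanishing g \<Longrightarrow> fps_vanishing (\<lambda>i. f i - g i)"
  by (simp add: fps_vanishing_def)

lemma fps_vanishing_mult:
  "fps_vanishing f \<Longrightarrow> fps_vanishing (\<lambda>i. f i * g i)"
  by (auto simp: fps_vanishing_def fps_mult_nth intro!: sum.neutral)

lemma fps_vanishing_square: "fps_vanishing f \<Longrightarrow> fps_vanishing (\<lambda>i. f i ^ 2)"
  using fps_vanishing_mult[of f f] by (simp add: power2_eq_square)

lemma suminf_fps_vanishing_add:
  "fps_vanishing f \<Longrightarrow> fps_vanishing g \<Longrightarrow> (\<Sum>i. f i + g i) = (\<Sum>i. f i) + (\<Sum>i. g i)"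
  by (simp add: fps_eq_iff suminf_fps_vanishing_nth fps_vanishing_add sum.distrib)

lemma suminf_fps_vanishing_diff:
  "fps_vanishing f \<Longrightarrow> fps_vanishing g \<Longrightarrow> (\<Sum>i. f i - g i) = (\<Sum>i. f i) - (\<Sum>i. g i)"
  by (simp add: fps_eq_iff suminf_fps_vanishing_nth fps_vanishing_diff sum_subtractf)

lemma suminf_fps_vanishing_mult_right:
  assumes "fps_vanishing f"
  shows "(\<Sum>i. f i * g) = (\<Sum>i. f i) * g"
proof (rule fps_ext)
  fix n
  have "(\<Sum>i<n. (f i * g) $ n) = (\<Sum>k=0..n. \<Sum>i<n. f i $ k * g $ (n - k))"
    unfolding fps_mult_nth by (rule sum.swap)
  also have "\<dots> = (\<Sum>k=0..n. (\<Sum>i<k. f i $ k) * g $ (n - k))"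
  proof (rule sum.cong)
    fix k assume "k \<in> {0..n}"
    then have "(\<Sum>i<n. f i $ k) = (\<Sum>i<k. f i $ k)"
      by (intro fps_vanishing_partial_sum_nth[OF assms]) simp
    then show "(\<Sum>i<n. f i $ k * g $ (n - k)) = (\<Sum>i<k. f i $ k) * g $ (n - k)"
      by (simp only: sum_distrib_right[symmetric])
  qed simp
  finally show "(\<Sum>i. f i * g) $ n = ((\<Sum>i. f i) * g) $ n"
    by (simp add: suminf_fps_vanishing_nth assms fps_vanishing_mult[OF assms] fps_mult_nth)
qed

subsection \<open>Carlitz compositions\<close>

lemma carlitz_iff:
  "carlitz W \<longleftrightarrow> W \<noteq> [] \<and> (\<forall>c\<in>set W. 0 < c) \<and> successively (\<noteq>) W"
  by (simp add: carlitz_def composition_def successively_conv_nth)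

lemma carlitz_Cons:
  "carlitz (x # W) \<longleftrightarrow> 0 < x \<and> (W = [] \<or> carlitz W \<and> hd W \<noteq> x)"
  unfolding carlitz_iff by (auto simp: successively_Cons)

lemma carlitz_rev [simp]: "carlitz (rev W) \<longleftrightarrow> carlitz W"
proof -
  have "successively (\<lambda>x y. y \<noteq> x) W \<longleftrightarrow> successively (\<noteq>) W"
    by (induction W) (auto simp: successively_Cons)
  then show ?thesis unfolding carlitz_iff by simp
qed

lemma length_le_sum_list_if_pos: "\<forall>c\<in>set W. 0 < (c::nat) \<Longrightarrow> length W \<le> sum_list W"
  by (induction W) auto

lemma carlitz_sum_list_pos: "carlitz W \<Longrightarrow> 0 < sum_list W"
  unfolding carlitz_iff by (cases W) auto

lemma carlitz_hd_le_sum_list: "carlitz W \<Longrightarrow> hd W \<le> sum_list W"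
  unfolding carlitz_iff by (cases W) auto

lemma finite_carlitz_sum_list: "finite {W. carlitz W \<and> P W \<and> sum_list W = n}"
proof (rule finite_subset[OF _ finite_lists_length_le[of "{0..n}" n]])
  show "{W. carlitz W \<and> P W \<and> sum_list W = n} \<subseteq> {xs. set xs \<subseteq> {0..n} \<and> length xs \<le> n}"
  proof safe
    fix W assume "carlitz W"
    then show "length W \<le> sum_list W"
      by (simp add: carlitz_iff length_le_sum_list_if_pos)
    show "c \<in> {0..sum_list W}" if "c \<in> set W" for c
      using that by (simp add: member_le_sum_list)
  qed
qed simp

definition carlitz_gf :: "(nat list \<Rightarrow> bool) \<Rightarrow> real fps" where
  "carlitz_gf P = Abs_fps (\<lambda>n. real (card {W. carlitz W \<and> P W \<and> sum_list W = n}))"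

lemma carlitz_gf_cong:
  assumes "\<And>W. carlitz W \<Longrightarrow> P W \<longleftrightarrow> Q W"
  shows "carlitz_gf P = carlitz_gf Q"
proof -
  have "{W. carlitz W \<and> P W \<and> sum_list W = n} = {W. carlitz W \<and> Q W \<and> sum_list W = n}" for n
    using assms by blast
  then show ?thesis by (simp add: carlitz_gf_def)
qed

lemma cyc_carlitz_gf_eq: "cyc_carlitz_gf = carlitz_gf (\<lambda>W. 2 \<le> length W \<longrightarrow> hd W \<noteq> last W)"
  by (simp add: cyc_carlitz_gf_def carlitz_gf_def cyclic_carlitz_def)

lemma carlitz_gf_diff:
  "carlitz_gf (\<lambda>W. P W \<and> \<not> Q W) = carlitz_gf P - carlitz_gf (\<lambda>W. P W \<and> Q W)"
proof (rule fps_ext)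
  fix n
  let ?A = "\<lambda>P. {W. carlitz W \<and> P W \<and> sum_list W = n}"
  have sub: "?A (\<lambda>W. P W \<and> Q W) \<subseteq> ?A P"
    by auto
  have "?A (\<lambda>W. P W \<and> \<not> Q W) = ?A P - ?A (\<lambda>W. P W \<and> Q W)"
    by auto
  then have "card (?A (\<lambda>W. P W \<and> \<not> Q W)) = card (?A P) - card (?A (\<lambda>W. P W \<and> Q W))"
    using card_Diff_subset[OF finite_carlitz_sum_list sub] by simp
  moreover have "card (?A (\<lambda>W. P W \<and> Q W)) \<le> card (?A P)"
    by (rule card_mono[OF finite_carlitz_sum_list sub])
  ultimately show "carlitz_gf (\<lambda>W. P W \<and> \<not> Q W) $ n = (carlitz_gf P - carlitz_gf (\<lambda>W. P W \<and> Q W)) $ n"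
    by (simp add: carlitz_gf_def)
qed

lemma carlitz_gf_rev: "carlitz_gf (\<lambda>W. P (rev W)) = carlitz_gf P"
proof (rule fps_ext)
  fix n
  have "{W. carlitz W \<and> P (rev W) \<and> sum_list W = n} = rev ` {W. carlitz W \<and> P W \<and> sum_list W = n}"
  proof (intro equalityI subsetI)
    fix W assume "W \<in> {W. carlitz W \<and> P (rev W) \<and> sum_list W = n}"
    then show "W \<in> rev ` {W. carlitz W \<and> P W \<and> sum_list W = n}"
      by (intro image_eqI[of W rev "rev W"]) auto
  qed auto
  then show "carlitz_gf (\<lambda>W. P (rev W)) $ n = carlitz_gf P $ n"
    by (simp add: carlitz_gf_def card_image)
qed

lemma carlitz_gf_last: "carlitz_gf (\<lambda>W. last W = j) = carlitz_gf (\<lambda>W. hd W = j)"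
proof -
  have "carlitz_gf (\<lambda>W. last W = j) = carlitz_gf (\<lambda>W. hd (rev W) = j)"
    by (rule carlitz_gf_cong) (simp add: carlitz_iff hd_rev)
  then show ?thesis by (simp add: carlitz_gf_rev[of "\<lambda>W. hd W = j"])
qed

lemma carlitz_gf_nth_eq_0:
  assumes "\<And>W. carlitz W \<Longrightarrow> P W \<Longrightarrow> sum_list W \<noteq> n"
  shows "carlitz_gf P $ n = 0"
proof -
  from assms have "{W. carlitz W \<and> P W \<and> sum_list W = n} = {}"
    by blast
  then show ?thesis
    unfolding carlitz_gf_def fps_nth_Abs_fps by (simp only: card.empty of_nat_0)
qed

lemma carlitz_gf_nth_0 [simp]: "carlitz_gf P $ 0 = 0"
  by (rule carlitz_gf_nth_eq_0) (metis carlitz_sum_list_pos neq0_conv)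

lemma carlitz_hd_eq_peel:
  assumes "0 < j" "P [j]" "\<And>W. W \<noteq> [] \<Longrightarrow> P (j # W) \<longleftrightarrow> P W"
  shows "{W. carlitz W \<and> P W \<and> hd W = j \<and> sum_list W = n} =
    (if n = j then {[j]} else {}) \<union>
    Cons j ` {W. carlitz W \<and> P W \<and> hd W \<noteq> j \<and> sum_list W = n - j}"
    (is "?L = ?S \<union> Cons j ` ?B")
proof (intro equalityI subsetI)
  fix W assume W: "W \<in> ?L"
  then obtain W' where W': "W = j # W'"
    by (cases W) (auto simp: carlitz_iff)
  show "W \<in> ?S \<union> Cons j ` ?B"
  proof (cases "W' = []")
    case True
    with W W' show ?thesis by auto
  next
    case False
    with W W' have "W' \<in> ?B"
      using assms(3) by (auto simp: carlitz_Cons)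
    with W' show ?thesis by blast
  qed
next
  fix W assume "W \<in> ?S \<union> Cons j ` ?B"
  then consider "n = j" "W = [j]"
    | W' where "W = j # W'" "carlitz W'" "P W'" "hd W' \<noteq> j" "sum_list W' = n - j"
    by (auto split: if_splits)
  then show "W \<in> ?L"
  proof cases
    case 1
    then show ?thesis using assms by (simp add: carlitz_Cons)
  next
    case (2 W')
    from \<open>carlitz W'\<close> have "W' \<noteq> []"
      by (simp add: carlitz_iff)
    moreover from \<open>carlitz W'\<close> have "0 < sum_list W'"
      by (rule carlitz_sum_list_pos)
    ultimately show ?thesis
      using 2 assms by (auto simp: carlitz_Cons)
  qed
qed

lemma carlitz_gf_hd_rec:
  assumes "0 < j" "P [j]" "\<And>W. W \<noteq> [] \<Longrightarrow> P (j # W) \<longleftrightarrow> P W"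
  shows "carlitz_gf (\<lambda>W. P W \<and> hd W = j) =
    fps_X ^ j * (1 + carlitz_gf P - carlitz_gf (\<lambda>W. P W \<and> hd W = j))"
proof -
  let ?G = "carlitz_gf (\<lambda>W. P W \<and> hd W \<noteq> j)"
  have "carlitz_gf (\<lambda>W. P W \<and> hd W = j) = fps_X ^ j * (1 + ?G)"
  proof (rule fps_ext)
    fix n
    let ?B = "{W. carlitz W \<and> P W \<and> hd W \<noteq> j \<and> sum_list W = n - j}"
    have peel: "{W. carlitz W \<and> P W \<and> hd W = j \<and> sum_list W = n} =
        (if n = j then {[j]} else {}) \<union> Cons j ` ?B"
      by (rule carlitz_hd_eq_peel) (use assms in auto)
    have "finite ?B"
      by (rule finite_subset[OF _ finite_carlitz_sum_list[of "\<lambda>_. True"]]) auto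
    then have "card {W. carlitz W \<and> P W \<and> hd W = j \<and> sum_list W = n} =
        card (if n = j then {[j]} else {}) + card (Cons j ` ?B)"
      unfolding peel by (intro card_Un_disjoint) (auto simp: carlitz_iff)
    also have "card (Cons j ` ?B) = card ?B"
      by (rule card_image) simp
    finally have "carlitz_gf (\<lambda>W. P W \<and> hd W = j) $ n = (if n = j then 1 else 0) + ?G $ (n - j)"
      by (simp add: carlitz_gf_def)
    then show "carlitz_gf (\<lambda>W. P W \<and> hd W = j) $ n = (fps_X ^ j * (1 + ?G)) $ n"
      by (cases n j rule: linorder_cases) (simp_all add: fps_X_power_mult_nth)
  qed
  then show ?thesis
    using carlitz_gf_diff[of P "\<lambda>W. hd W = j"] by (simp add: add_diff_eq)
qed

lemma fps_vanishing_carlitz_gf_hd: "fps_vanishing (\<lambda>i. carlitz_gf (\<lambda>W. P W \<and> hd W = Suc i))"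
  unfolding fps_vanishing_def
proof (intro allI impI)
  fix i n :: nat assume "n \<le> i"
  then show "carlitz_gf (\<lambda>W. P W \<and> hd W = Suc i) $ n = 0"
    by (intro carlitz_gf_nth_eq_0) (use carlitz_hd_le_sum_list in fastforce)
qed

lemma carlitz_gf_sum_hd: "carlitz_gf P = (\<Sum>i. carlitz_gf (\<lambda>W. P W \<and> hd W = Suc i))"
proof (rule fps_ext)
  fix n
  let ?A = "\<lambda>i. {W. carlitz W \<and> P W \<and> hd W = Suc i \<and> sum_list W = n}"
  have "{W. carlitz W \<and> P W \<and> sum_list W = n} = (\<Union>i<n. ?A i)"
  proof (intro equalityI subsetI)
    fix W assume W: "W \<in> {W. carlitz W \<and> P W \<and> sum_list W = n}"
    then have "0 < hd W" "hd W \<le> n"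
      using carlitz_hd_le_sum_list by (auto simp: carlitz_iff)
    with W show "W \<in> (\<Union>i<n. ?A i)"
      by (auto intro!: bexI[of _ "hd W - 1"])
  qed auto
  moreover have "finite (?A i)" for i
    by (rule finite_subset[OF _ finite_carlitz_sum_list[of "\<lambda>_. True" n]]) auto
  then have "card (\<Union>i<n. ?A i) = (\<Sum>i<n. card (?A i))"
    by (intro card_UN_disjoint) auto
  ultimately have "card {W. carlitz W \<and> P W \<and> sum_list W = n} = (\<Sum>i<n. card (?A i))"
    by simp
  then show "carlitz_gf P $ n = (\<Sum>i. carlitz_gf (\<lambda>W. P W \<and> hd W = Suc i)) $ n"
    unfolding suminf_fps_vanishing_nth[OF fps_vanishing_carlitz_gf_hd] by (simp add: carlitz_gf_def)
qed

lemma carlitz_gf_length_eq_1: "carlitz_gf (\<lambda>W. length W = 1) = (\<Sum>i. fps_X ^ (i+1))"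
proof (rule fps_ext)
  fix n
  have "{W. carlitz W \<and> length W = 1 \<and> sum_list W = n} = (if 0 < n then {[n]} else {})"
    by (auto simp: carlitz_iff length_Suc_conv)
  moreover have "(\<Sum>i<n. (fps_X ^ (i+1) :: real fps) $ n) = (if 0 < n then 1 else 0)"
    by (cases n) simp_all
  ultimately show "carlitz_gf (\<lambda>W. length W = 1) $ n = (\<Sum>i. fps_X ^ (i+1)) $ n"
    unfolding suminf_fps_vanishing_nth[OF fps_vanishing_X_power] by (simp add: carlitz_gf_def)
qed

lemma cyc_carlitz_gf_decompose:
  "cyc_carlitz_gf =
    carlitz_gf (\<lambda>_. True) - carlitz_gf (\<lambda>W. hd W = last W) + carlitz_gf (\<lambda>W. length W = 1)"
proof -
  have "cyc_carlitz_gf = carlitz_gf (\<lambda>W. True \<and> \<not> (hd W = last W \<and> \<not> length W = 1))"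
    unfolding cyc_carlitz_gf_eq
    by (rule carlitz_gf_cong) (auto simp: carlitz_iff simp flip: length_greater_0_conv)
  also have "\<dots> = carlitz_gf (\<lambda>_. True) - carlitz_gf (\<lambda>W. True \<and> (hd W = last W \<and> \<not> length W = 1))"
    by (rule carlitz_gf_diff)
  also have "carlitz_gf (\<lambda>W. True \<and> (hd W = last W \<and> \<not> length W = 1)) =
      carlitz_gf (\<lambda>W. hd W = last W) - carlitz_gf (\<lambda>W. hd W = last W \<and> length W = 1)"
    using carlitz_gf_diff[of "\<lambda>W. hd W = last W" "\<lambda>W. length W = 1"] by simp
  also have "carlitz_gf (\<lambda>W. hd W = last W \<and> length W = 1) = carlitz_gf (\<lambda>W. length W = 1)"
    by (rule carlitz_gf_cong) (auto simp: length_Suc_conv)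
  finally show ?thesis
    by (simp add: algebra_simps)
qed

subsection \<open>Solving the recurrences\<close>

lemma fps_divide_unit_eq_iff:
  fixes e x y :: "'a::field fps"
  assumes "e $ 0 \<noteq> 0"
  shows "y / e = x \<longleftrightarrow> y = x * e"
proof -
  have "y / e = y * inverse e"
    using assms by (rule fps_divide_unit)
  moreover have "inverse e * e = 1" "e * inverse e = 1"
    using assms by (rule inverse_mult_eq_1, rule inverse_mult_eq_1')
  ultimately show ?thesis
    by (metis mult.assoc mult_1_right)
qed

definition fps_X_power_frac :: "nat \<Rightarrow> 'a::field fps" where
  "fps_X_power_frac k = fps_X ^ k / (1 + fps_X ^ k)"

lemma fps_X_power_frac_mult_cancel:
  assumes "0 < k"
  shows "fps_X_power_frac k * (1 + fps_X ^ k) = (fps_X ^ k :: 'a::field fps)"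
  using assms fps_divide_unit_eq_iff[of "1 + fps_X ^ k" "fps_X ^ k" "fps_X_power_frac k"]
  by (simp add: fps_X_power_frac_def)

lemma fps_vanishing_X_power_frac: "fps_vanishing (\<lambda>i. fps_X_power_frac (i+1))"
  using fps_vanishing_X_power_mult[of "\<lambda>i. inverse (1 + fps_X ^ (i+1))"]
  by (simp add: fps_X_power_frac_def fps_divide_unit)

lemma fps_X_power_recurrence_solve:
  fixes F G :: "'a::field fps"
  assumes "0 < k" "F = fps_X ^ k * (1 + G - F)"
  shows "F = fps_X_power_frac k * (1 + G)"
proof (rule mult_right_cancel[THEN iffD1])
  have "(1 + fps_X ^ k :: 'a fps) $ 0 = 1"
    using assms(1) by simp
  then show "1 + fps_X ^ k \<noteq> (0 :: 'a fps)"
    by (metis fps_zero_nth zero_neq_one)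
  from assms(2) have "F = fps_X ^ k * (1 + G) - fps_X ^ k * F"
    by (simp only: right_diff_distrib)
  then have "F + fps_X ^ k * F = fps_X ^ k * (1 + G)"
    by (simp only: eq_diff_eq)
  also have "\<dots> = fps_X_power_frac k * (1 + fps_X ^ k) * (1 + G)"
    by (simp only: fps_X_power_frac_mult_cancel[OF assms(1)])
  finally show "F * (1 + fps_X ^ k) = fps_X_power_frac k * (1 + G) * (1 + fps_X ^ k)"
    by (simp add: algebra_simps)
qed

lemma fps_X_power_div_square:
  assumes "0 < k"
  shows "(fps_X ^ k :: 'a::field fps) / (1 + fps_X ^ k) ^ 2 =
    fps_X_power_frac k - fps_X_power_frac k ^ 2"
proof -
  define e :: "'a fps" where "e = 1 + fps_X ^ k"
  let ?a = "fps_X_power_frac k :: 'a fps"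
  have ae: "?a * e = fps_X ^ k"
    unfolding e_def by (rule fps_X_power_frac_mult_cancel[OF assms])
  have "(?a - ?a ^ 2) * e ^ 2 = (?a * e) * e - (?a * e) ^ 2"
    by (simp add: algebra_simps power2_eq_square)
  also have "\<dots> = fps_X ^ k"
    unfolding ae by (simp add: e_def algebra_simps power2_eq_square)
  finally show ?thesis
    using assms unfolding e_def[symmetric]
    by (subst fps_divide_unit_eq_iff) (simp_all add: e_def fps_nth_power_0 zero_power)
qed

lemma fps_X_power_double_div:
  assumes "0 < k"
  shows "(fps_X ^ (2 * k) :: 'a::field fps) / (1 + fps_X ^ k) = fps_X ^ k - fps_X_power_frac k"
proof -
  define e :: "'a fps" where "e = 1 + fps_X ^ k"
  let ?a = "fps_X_power_frac k :: 'a fps"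
  have ae: "?a * e = fps_X ^ k"
    unfolding e_def by (rule fps_X_power_frac_mult_cancel[OF assms])
  have "(fps_X ^ k - ?a) * e = fps_X ^ k * e - ?a * e"
    by (simp add: algebra_simps)
  also have "\<dots> = fps_X ^ (2 * k)"
    unfolding ae by (simp add: e_def algebra_simps power_mult power2_eq_square)
  finally show ?thesis
    using assms unfolding e_def[symmetric]
    by (subst fps_divide_unit_eq_iff) (simp_all add: e_def)
qed

lemma suminf_X_power_div_square:
  "(\<Sum>i. fps_X ^ (i+1) / (1 + fps_X ^ (i+1)) ^ 2 :: 'a::field fps) =
    (\<Sum>i. fps_X_power_frac (i+1)) - (\<Sum>i. fps_X_power_frac (i+1) ^ 2)"
proof -
  have "(\<Sum>i. fps_X ^ (i+1) / (1 + fps_X ^ (i+1)) ^ 2 :: 'a fps) =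
      (\<Sum>i. fps_X_power_frac (i+1) - fps_X_power_frac (i+1) ^ 2)"
    by (intro arg_cong[where f=suminf] ext fps_X_power_div_square) simp
  also have "\<dots> = (\<Sum>i. fps_X_power_frac (i+1)) - (\<Sum>i. fps_X_power_frac (i+1) ^ 2)"
    using fps_vanishing_X_power_frac fps_vanishing_square[OF fps_vanishing_X_power_frac]
    by (rule suminf_fps_vanishing_diff)
  finally show ?thesis .
qed

lemma suminf_X_power_double_div:
  "(\<Sum>i. fps_X ^ (2*(i+1)) / (1 + fps_X ^ (i+1)) :: 'a::field fps) =
    (\<Sum>i. fps_X ^ (i+1)) - (\<Sum>i. fps_X_power_frac (i+1))"
proof -
  have "(\<Sum>i. fps_X ^ (2*(i+1)) / (1 + fps_X ^ (i+1)) :: 'a fps) =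
      (\<Sum>i. fps_X ^ (i+1) - fps_X_power_frac (i+1))"
    by (intro arg_cong[where f=suminf] ext fps_X_power_double_div) simp
  also have "\<dots> = (\<Sum>i. fps_X ^ (i+1)) - (\<Sum>i. fps_X_power_frac (i+1))"
    using fps_vanishing_X_power fps_vanishing_X_power_frac by (rule suminf_fps_vanishing_diff)
  finally show ?thesis .
qed

lemma carlitz_gf_hd_solved:
  "carlitz_gf (\<lambda>W. hd W = i+1) = fps_X_power_frac (i+1) * (1 + carlitz_gf (\<lambda>_. True))"
proof (rule fps_X_power_recurrence_solve)
  show "carlitz_gf (\<lambda>W. hd W = i+1) =
      fps_X ^ (i+1) * (1 + carlitz_gf (\<lambda>_. True) - carlitz_gf (\<lambda>W. hd W = i+1))"
    using carlitz_gf_hd_rec[of "i+1" "\<lambda>_. True"] by simp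
qed simp

lemma carlitz_gf_hd_last_solved:
  "carlitz_gf (\<lambda>W. last W = i+1 \<and> hd W = i+1) =
    fps_X_power_frac (i+1) * (1 + carlitz_gf (\<lambda>W. hd W = i+1))"
proof (rule fps_X_power_recurrence_solve)
  show "carlitz_gf (\<lambda>W. last W = i+1 \<and> hd W = i+1) = fps_X ^ (i+1) *
      (1 + carlitz_gf (\<lambda>W. hd W = i+1) - carlitz_gf (\<lambda>W. last W = i+1 \<and> hd W = i+1))"
    using carlitz_gf_hd_rec[of "i+1" "\<lambda>W. last W = i+1"] by (simp add: carlitz_gf_last)
qed simp

lemma carlitz_gf_True_eq:
  "carlitz_gf (\<lambda>_. True) = (\<Sum>i. fps_X_power_frac (i+1)) * (1 + carlitz_gf (\<lambda>_. True))"
proof -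
  have "carlitz_gf (\<lambda>_. True) = (\<Sum>i. carlitz_gf (\<lambda>W. hd W = i+1))"
    using carlitz_gf_sum_hd[of "\<lambda>_. True"] by simp
  also have "\<dots> = (\<Sum>i. fps_X_power_frac (i+1) * (1 + carlitz_gf (\<lambda>_. True)))"
    by (simp only: carlitz_gf_hd_solved)
  finally show ?thesis
    by (simp only: suminf_fps_vanishing_mult_right[OF fps_vanishing_X_power_frac])
qed

lemma carlitz_gf_hd_eq_last:
  "carlitz_gf (\<lambda>W. hd W = last W) =
    (\<Sum>i. fps_X_power_frac (i+1)) + (\<Sum>i. fps_X_power_frac (i+1) ^ 2) * (1 + carlitz_gf (\<lambda>_. True))"
proof -
  let ?a = "\<lambda>i. fps_X_power_frac (i+1) :: real fps"
  have "carlitz_gf (\<lambda>W. hd W = last W) = (\<Sum>i. carlitz_gf (\<lambda>W. hd W = last W \<and> hd W = Suc i))"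
    by (rule carlitz_gf_sum_hd)
  also have "\<dots> = (\<Sum>i. carlitz_gf (\<lambda>W. last W = i+1 \<and> hd W = i+1))"
  proof -
    have "carlitz_gf (\<lambda>W. hd W = last W \<and> hd W = Suc i) =
        carlitz_gf (\<lambda>W. last W = i+1 \<and> hd W = i+1)" for i
      by (rule carlitz_gf_cong) auto
    then show ?thesis by simp
  qed
  also have "\<dots> = (\<Sum>i. ?a i + ?a i ^ 2 * (1 + carlitz_gf (\<lambda>_. True)))"
    by (simp only: carlitz_gf_hd_last_solved carlitz_gf_hd_solved) (simp add: algebra_simps power2_eq_square)
  also have "\<dots> = (\<Sum>i. ?a i) + (\<Sum>i. ?a i ^ 2) * (1 + carlitz_gf (\<lambda>_. True))"
  proof -
    have va: "fps_vanishing ?a" and vaa: "fps_vanishing (\<lambda>i. ?a i ^ 2)"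
      by (rule fps_vanishing_X_power_frac, rule fps_vanishing_square[OF fps_vanishing_X_power_frac])
    show ?thesis
      by (simp only: suminf_fps_vanishing_add[OF va fps_vanishing_mult[OF vaa]]
          suminf_fps_vanishing_mult_right[OF vaa])
  qed
  finally show ?thesis .
qed

theorem corollary5p4:
  shows "cyc_carlitz_gf =
    (\<Sum>i. fps_X ^ (i+1) / (1 + fps_X ^ (i+1)) ^ 2)
      / (1 - (\<Sum>i. fps_X ^ (i+1) / (1 + fps_X ^ (i+1))))
    + (\<Sum>i. fps_X ^ (2*(i+1)) / (1 + fps_X ^ (i+1)))"
proof -
  define S Q Y C :: "real fps" where "S = (\<Sum>i. fps_X_power_frac (i+1))"
    and "Q = (\<Sum>i. fps_X_power_frac (i+1) ^ 2)" and "Y = (\<Sum>i. fps_X ^ (i+1))"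
    and "C = carlitz_gf (\<lambda>_. True)"
  have C: "C = S * (1 + C)"
    using carlitz_gf_True_eq unfolding S_def C_def .
  have "(S - Q) / (1 - S) = (S - Q) * (1 + C)"
  proof (subst fps_divide_unit_eq_iff)
    have "S $ 0 = 0"
      unfolding S_def suminf_fps_vanishing_nth[OF fps_vanishing_X_power_frac] by simp
    then show "(1 - S) $ 0 \<noteq> 0"
      by simp
    show "S - Q = (S - Q) * (1 + C) * (1 - S)"
      using C by algebra
  qed
  then show ?thesis
    unfolding cyc_carlitz_gf_decompose carlitz_gf_hd_eq_last carlitz_gf_length_eq_1
      suminf_X_power_div_square suminf_X_power_double_div fps_X_power_frac_def[symmetric]
      S_def[symmetric] Q_def[symmetric] Y_def[symmetric] C_def[symmetric]
    using C by algebra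
qed

end
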